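(* For every finite loopless graph $G$ (multiple edges allowed), $\nu_2(G) \geq \frac{2}{3}\cdot \nu_3(G)$.
   Context: For an integer $k\geq 1$ and a graph $G$, $\nu_k(G)$ denotes the maximum number of edges of a $k$-edge-colorable subgraph of $G$ (a subgraph whose edges can be colored with $k$ colors so that adjacent edges receive different colors). *)

theory Defs
  imports Complex_Main
begin

text \<open>A finite loopless multigraph: finite vertex set V, finite edge set E
  (edges are abstract labels, so parallel edges are allowed), and an incidence
  map ends assigning to each edge its set of exactly two distinct endpoints in V.\<close>

definition loopless_multigraph :: "'v set \<Rightarrow> 'e set \<Rightarrow> ('e \<Rightarrow> 'v set) \<Rightarrow> bool" where
  "loopless_multigraph V E ends \<longleftrightarrow>
     finite V \<and> finite E \<and> (\<forall>e\<in>E. ends e \<subseteq> V \<and> card (ends e) = 2)"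

definition k_edge_colorable :: "nat \<Rightarrow> ('e \<Rightarrow> 'v set) \<Rightarrow> 'e set \<Rightarrow> bool" where
  "k_edge_colorable k ends F \<longleftrightarrow>
     (\<exists>c :: 'e \<Rightarrow> nat. (\<forall>e\<in>F. c e < k) \<and>
        (\<forall>e\<in>F. \<forall>f\<in>F. e \<noteq> f \<and> ends e \<inter> ends f \<noteq> {} \<longrightarrow> c e \<noteq> c f))"

text \<open>nu_k(G): maximum number of edges of a k-edge-colorable subgraph
  (the number of edges of a subgraph depends only on its edge set).\<close>

definition nu :: "nat \<Rightarrow> 'e set \<Rightarrow> ('e \<Rightarrow> 'v set) \<Rightarrow> nat" where
  "nu k E ends = Max {card F | F. F \<subseteq> E \<and> k_edge_colorable k ends F}"

end

theory Submission
  imports Defs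
begin

text \<open>Delete one colour class of a maximum proper 3-edge-colouring. Each of the three choices
  leaves a 2-edge-colourable subgraph, and together the three remainders cover every edge
  exactly twice, so the largest of them has at least two thirds of the edges.\<close>

definition proper_edge_colouring :: "nat \<Rightarrow> ('e \<Rightarrow> 'v set) \<Rightarrow> 'e set \<Rightarrow> ('e \<Rightarrow> nat) \<Rightarrow> bool" where
  "proper_edge_colouring k ends F c \<longleftrightarrow>
     (\<forall>e\<in>F. c e < k) \<and> (\<forall>e\<in>F. \<forall>f\<in>F. e \<noteq> f \<and> ends e \<inter> ends f \<noteq> {} \<longrightarrow> c e \<noteq> c f)"

lemma k_edge_colorable_iff_proper_edge_colouring:
  "k_edge_colorable k ends F \<longleftrightarrow> (\<exists>c. proper_edge_colouring k ends F c)"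
  unfolding k_edge_colorable_def proper_edge_colouring_def by blast

lemma finite_colorable_subset_cards:
  "finite E \<Longrightarrow> finite {card F | F. F \<subseteq> E \<and> k_edge_colorable k ends F}"
  by (rule finite_subset[of _ "{0..card E}"]) (auto intro: card_mono)

lemma card_le_nu:
  assumes "finite E" "F \<subseteq> E" "k_edge_colorable k ends F"
  shows "card F \<le> nu k E ends"
  unfolding nu_def using assms by (intro Max_ge[OF finite_colorable_subset_cards]) auto

lemma nu_attained:
  assumes "finite E"
  obtains F where "F \<subseteq> E" "k_edge_colorable k ends F" "nu k E ends = card F"
proof -
  have "k_edge_colorable k ends {}"
    by (simp add: k_edge_colorable_def)
  then have "{card F | F. F \<subseteq> E \<and> k_edge_colorable k ends F} \<noteq> {}"
    by blast
  from Max_in[OF finite_colorable_subset_cards[OF assms] this] obtain F where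
    "F \<subseteq> E" "k_edge_colorable k ends F" "nu k E ends = card F"
    unfolding nu_def by auto
  then show ?thesis
    by (rule that)
qed

lemma proper_edge_colouring_delete_class:
  assumes c: "proper_edge_colouring k ends F c" and "i < k"
  shows "proper_edge_colouring (k - 1) ends {e\<in>F. c e \<noteq> i} (\<lambda>e. if c e = k - 1 then i else c e)"
  unfolding proper_edge_colouring_def
proof (intro conjI ballI impI)
  fix e assume "e \<in> {e\<in>F. c e \<noteq> i}"
  then show "(if c e = k - 1 then i else c e) < k - 1"
    using assms unfolding proper_edge_colouring_def by auto
next
  fix e f assume e: "e \<in> {e\<in>F. c e \<noteq> i}" and f: "f \<in> {e\<in>F. c e \<noteq> i}"
    and "e \<noteq> f \<and> ends e \<inter> ends f \<noteq> {}"
  then have "c e \<noteq> c f"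
    using c unfolding proper_edge_colouring_def by blast
  then show "(if c e = k - 1 then i else c e) \<noteq> (if c f = k - 1 then i else c f)"
    using e f by auto
qed

lemma card_filter_eq_sum:
  "finite A \<Longrightarrow> card {x\<in>A. P x} = (\<Sum>x\<in>A. if P x then 1 else 0)"
  by (simp add: sum.inter_filter[symmetric])

lemma sum_card_delete_class:
  assumes "finite F" "\<forall>e\<in>F. c e < k"
  shows "(\<Sum>i<k. card {e\<in>F. c e \<noteq> i}) = (k - 1) * card F"
proof -
  have "(\<Sum>i<k. card {e\<in>F. c e \<noteq> i}) = (\<Sum>i<k. \<Sum>e\<in>F. if c e \<noteq> i then 1 else 0)"
    using assms(1) by (simp only: card_filter_eq_sum)
  also have "\<dots> = (\<Sum>e\<in>F. \<Sum>i<k. if c e \<noteq> i then 1 else 0)"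
    by (rule sum.swap)
  also have "\<dots> = (\<Sum>e\<in>F. card {i\<in>{..<k}. c e \<noteq> i})"
    by (simp only: card_filter_eq_sum finite_lessThan)
  also have "\<dots> = (\<Sum>e\<in>F. k - 1)"
  proof (rule sum.cong)
    fix e assume "e \<in> F"
    then have "{i\<in>{..<k}. c e \<noteq> i} = {..<k} - {c e}" "c e < k"
      using assms(2) by auto
    then show "card {i\<in>{..<k}. c e \<noteq> i} = k - 1"
      by simp
  qed simp
  finally show ?thesis
    by simp
qed

theorem nu_pred_ratio:
  assumes "finite E"
  shows "(k - 1) * nu k E ends \<le> k * nu (k - 1) E ends"
proof -
  obtain F where F: "F \<subseteq> E" "k_edge_colorable k ends F" "nu k E ends = card F"
    using nu_attained[OF assms] .
  then obtain c where c: "proper_edge_colouring k ends F c"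
    by (auto simp: k_edge_colorable_iff_proper_edge_colouring)
  have "finite F"
    using F(1) assms finite_subset by blast
  moreover have "\<forall>e\<in>F. c e < k"
    using c by (simp add: proper_edge_colouring_def)
  ultimately have "(k - 1) * nu k E ends = (\<Sum>i<k. card {e\<in>F. c e \<noteq> i})"
    using F(3) by (simp add: sum_card_delete_class)
  also have "\<dots> \<le> (\<Sum>i<k. nu (k - 1) E ends)"
  proof (rule sum_mono)
    fix i assume "i \<in> {..<k}"
    then have "k_edge_colorable (k - 1) ends {e\<in>F. c e \<noteq> i}"
      using proper_edge_colouring_delete_class[OF c]
      by (auto simp: k_edge_colorable_iff_proper_edge_colouring)
    then show "card {e\<in>F. c e \<noteq> i} \<le> nu (k - 1) E ends"
      using F(1) by (intro card_le_nu[OF assms]) auto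
  qed
  also have "\<dots> = k * nu (k - 1) E ends"
    by simp
  finally show ?thesis .
qed

theorem proposition1:
  fixes V :: "'v set" and E :: "'e set" and ends :: "'e \<Rightarrow> 'v set"
  assumes "loopless_multigraph V E ends"
  shows "real (nu 2 E ends) \<ge> 2 / 3 * real (nu 3 E ends)"
proof -
  have "finite E"
    using assms by (simp add: loopless_multigraph_def)
  from nu_pred_ratio[OF this, of 3 ends] have "2 * nu 3 E ends \<le> 3 * nu 2 E ends"
    by simp
  then show ?thesis
    by linarith
qed

end
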